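(* (Complementary slackness.) Fix $x\in\mathbb{R}^n$. Given $\mathbf{u}^\star\in\mathcal{U}_{\mathbb{F}}(0)$ and $h^\star\in\mathcal{M}_{\mathbb{F}}(0)$, $\mathbf{u}^\star$ attains the supremum in the primal problem $\sup_{\mathbf{u}\in\mathcal{U}_{\mathbb{F}}(0)}J(0,x;\mathbf{u})$ and $h^\star$ attains the infimum in the dual problem \[ \inf_{h\in\mathcal{M}_{\mathbb{F}}(0)}\mathbb{E}_{0,x}\Big[\sup_{\mathbf{u}\in\mathcal{U}(0)}\Big\{\Lambda(x_T)+\int_0^Tg(s,x_s,u_s)ds-h(\mathbf{u},\mathbf{w})\Big\}\Big] \] if and only if $\mathbb{E}_{0,x}[h^\star(\mathbf{u}^\star,\mathbf{w})]=0$ and \[ \mathbb{E}_{0,x}\Big[\Lambda(x^\star_T)+\int_0^Tg(s,x^\star_s,u^\star_s)ds-h^\star(\mathbf{u}^\star,\mathbf{w})\Big]=\mathbb{E}_{0,x}\Big[\sup_{\mathbf{u}\in\mathcal{U}(0)}\Big\{\Lambda(x_T)+\int_0^Tg(s,x_s,u_s)ds-h^\star(\mathbf{u},\mathbf{w})\Big\}\Big], \] where $(x^\star_t)$ is the state process under $\mathbf{u}^\star$ with $x^\star_0=x$.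
   Context: Let $(\Omega,\mathcal{F},\mathbb{P})$ carry an $m$-dimensional Brownian motion $\mathbf{w}=(w_t)_{t\in[0,T]}$ with natural augmented filtration $\mathbb{F}=\{\mathcal{F}_t\}$, $\mathcal{F}=\mathcal{F}_T$. The controlled state $x_t\in\mathbb{R}^n$ follows $dx_t=b(t,x_t,u_t)\,dt+\sigma(t,x_t)\,dw_t$, $u_t\in\mathcal{U}\subset\mathbb{R}^{d_u}$, with $b,\sigma$ continuous, of linear growth ($\|b(t,x,u)\|+\|\sigma(t,x)\|\le C_1(1+\|x\|+\|u\|)$) and Lipschitz in $(t,x)$ uniformly in $u$. $\mathcal{U}_{\mathbb{F}}(t)$: $\mathbb{F}$-progressively measurable $\mathcal{U}$-valued $(u_s)_{s\in[t,T]}$ with $\mathbb{E}\int_t^T\|u_s\|^2ds<\infty$ and $\mathbb{E}_{t,x}[\sup_{s\in[t,T]}\|x_s\|^2]<\infty$, $\mathbb{E}_{t,x}[\cdot]=\mathbb{E}[\cdot\mid x_t=x]$. $\mathcal{U}(t)$: all $\mathcal{B}([t,T])\times\mathcal{F}$-measurable $\mathcal{U}$-valued processes. It is assumed that for each $\mathbf{u}\in\mathcal{U}(0)$ and $x_0=x$ the state equation has a unique $\mathcal{B}([0,T])\times\mathcal{F}$-measurable solution, which is the Itô solution when $\mathbf{u}\in\mathcal{U}_{\mathbb{F}}(0)$. $\Lambda$, $g$ are reward functions of polynomial growth; $J(0,x;\mathbf{u})=\mathbb{E}_{0,x}[\Lambda(x_T)+\int_0^Tg(s,x_s,u_s)ds]$.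 $\mathcal{M}_{\mathbb{F}}(0)$ is the set of functions $h(\mathbf{u},\mathbf{w})$ of $\mathbf{u}\in\mathcal{U}(0)$ and a Brownian path with $\mathbb{E}_{0,x}[h(\mathbf{u},\mathbf{w})]\le0$ for all $x$ and all $\mathbf{u}\in\mathcal{U}_{\mathbb{F}}(0)$. (The primal and dual optimal values coincide, by strong duality.) *)

theory Defs
  imports "HOL-Probability.Probability"
begin

definition brownian :: "'w measure \<Rightarrow> real \<Rightarrow> (real \<Rightarrow> 'w \<Rightarrow> real^'m) \<Rightarrow> bool" where
  "brownian M T w \<longleftrightarrow>
     (\<forall>\<omega>\<in>space M. w 0 \<omega> = 0 \<and> continuous_on {0..T} (\<lambda>t. w t \<omega>)) \<and>
     (\<forall>t\<in>{0..T}. w t \<in> borel_measurable M) \<and>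
     (\<forall>s t i. 0 \<le> s \<and> s < t \<and> t \<le> T \<longrightarrow>
        distributed M lborel (\<lambda>\<omega>. (w t \<omega> - w s \<omega>) $ i)
          (\<lambda>y. ennreal (normal_density 0 (sqrt (t - s)) y))) \<and>
     (\<forall>(ts :: nat \<Rightarrow> real) k. 0 \<le> ts 0 \<and> ts k \<le> T \<and> (\<forall>j<k. ts j < ts (Suc j)) \<longrightarrow>
        prob_space.indep_vars M (\<lambda>_. borel)
          (\<lambda>(i, j) \<omega>. (w (ts (Suc j)) \<omega> - w (ts j) \<omega>) $ i) (UNIV \<times> {..<k}))"

definition nat_filt :: "'w measure \<Rightarrow> (real \<Rightarrow> 'w \<Rightarrow> real^'m) \<Rightarrow> real \<Rightarrow> 'w set set" where
  "nat_filt M w t = sigma_sets (space M)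
      (\<Union>s\<in>{0..t}. {w s -` B \<inter> space M | B. B \<in> sets borel})"

definition aug_filt :: "'w measure \<Rightarrow> (real \<Rightarrow> 'w \<Rightarrow> real^'m) \<Rightarrow> real \<Rightarrow> 'w set set" where
  "aug_filt M w t = {A \<in> sets M. \<exists>B\<in>nat_filt M w t. (A - B) \<union> (B - A) \<in> null_sets M}"

definition filt_meas :: "'w measure \<Rightarrow> (real \<Rightarrow> 'w \<Rightarrow> real^'m) \<Rightarrow> real \<Rightarrow> 'w measure" where
  "filt_meas M w t = sigma (space M) (aug_filt M w t)"

definition progressive ::
  "'w measure \<Rightarrow> (real \<Rightarrow> 'w \<Rightarrow> real^'m) \<Rightarrow> real \<Rightarrow> (real \<Rightarrow> 'w \<Rightarrow> 'b::topological_space) \<Rightarrow> bool" where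
  "progressive M w T u \<longleftrightarrow>
     (\<forall>t\<in>{0..T}. (\<lambda>(s, \<omega>). u s \<omega>) \<in>
        borel_measurable (restrict_space borel {0..t} \<Otimes>\<^sub>M filt_meas M w t))"

definition Ucal :: "'w measure \<Rightarrow> real \<Rightarrow> (real^'d) set \<Rightarrow> (real \<Rightarrow> 'w \<Rightarrow> real^'d) set" where
  "Ucal M T U = {u. (\<lambda>(s, \<omega>). u s \<omega>) \<in> borel_measurable (restrict_space borel {0..T} \<Otimes>\<^sub>M M)
                 \<and> (\<forall>s\<in>{0..T}. \<forall>\<omega>\<in>space M. u s \<omega> \<in> U)}"

text \<open>\<U>_\<F>(0) for initial state x; X x u is the state process under u with x_0 = x.\<close>
definition UF :: "'w measure \<Rightarrow> (real \<Rightarrow> 'w \<Rightarrow> real^'m) \<Rightarrow> real \<Rightarrow> (real^'d) set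
    \<Rightarrow> (real^'n \<Rightarrow> (real \<Rightarrow> 'w \<Rightarrow> real^'d) \<Rightarrow> real \<Rightarrow> 'w \<Rightarrow> real^'n) \<Rightarrow> real^'n
    \<Rightarrow> (real \<Rightarrow> 'w \<Rightarrow> real^'d) set" where
  "UF M w T U X x = {u. progressive M w T u \<and> (\<forall>s\<in>{0..T}. \<forall>\<omega>\<in>space M. u s \<omega> \<in> U)
      \<and> (\<integral>\<^sup>+\<omega>. (\<integral>\<^sup>+s. indicator {0..T} s * ennreal (norm (u s \<omega>) ^ 2) \<partial>lborel) \<partial>M) < \<infinity>
      \<and> (\<integral>\<^sup>+\<omega>. (SUP s\<in>{0..T}. ennreal (norm (X x u s \<omega>) ^ 2)) \<partial>M) < \<infinity>}"

definition reward :: "real \<Rightarrow> (real^'n \<Rightarrow> real) \<Rightarrow> (real \<Rightarrow> real^'n \<Rightarrow> real^'d \<Rightarrow> real)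
    \<Rightarrow> (real^'n \<Rightarrow> (real \<Rightarrow> 'w \<Rightarrow> real^'d) \<Rightarrow> real \<Rightarrow> 'w \<Rightarrow> real^'n) \<Rightarrow> real^'n
    \<Rightarrow> (real \<Rightarrow> 'w \<Rightarrow> real^'d) \<Rightarrow> 'w \<Rightarrow> real" where
  "reward T Lam g X x u \<omega> =
     Lam (X x u T \<omega>) + set_lebesgue_integral lborel {0..T} (\<lambda>s. g s (X x u s \<omega>) (u s \<omega>))"

definition eexp :: "'w measure \<Rightarrow> ('w \<Rightarrow> ereal) \<Rightarrow> ereal" where
  "eexp M Y = enn2ereal (\<integral>\<^sup>+\<omega>. e2ennreal (Y \<omega>) \<partial>M) - enn2ereal (\<integral>\<^sup>+\<omega>. e2ennreal (- Y \<omega>) \<partial>M)"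

definition Jobj where
  "Jobj M T Lam g X x u = eexp M (\<lambda>\<omega>. ereal (reward T Lam g X x u \<omega>))"

definition path :: "(real \<Rightarrow> 'w \<Rightarrow> 'b) \<Rightarrow> 'w \<Rightarrow> real \<Rightarrow> 'b" where
  "path u \<omega> = (\<lambda>t. u t \<omega>)"

definition MF :: "'w measure \<Rightarrow> (real \<Rightarrow> 'w \<Rightarrow> real^'m) \<Rightarrow> real \<Rightarrow> (real^'d) set
    \<Rightarrow> (real^'n \<Rightarrow> (real \<Rightarrow> 'w \<Rightarrow> real^'d) \<Rightarrow> real \<Rightarrow> 'w \<Rightarrow> real^'n)
    \<Rightarrow> ((real \<Rightarrow> real^'d) \<Rightarrow> (real \<Rightarrow> real^'m) \<Rightarrow> real) set" where
  "MF M w T U X = {h. \<forall>x. \<forall>u\<in>UF M w T U X x.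
      integrable M (\<lambda>\<omega>. h (path u \<omega>) (path w \<omega>)) \<and>
      (\<integral>\<omega>. h (path u \<omega>) (path w \<omega>) \<partial>M) \<le> 0}"

definition Dobj where
  "Dobj M w T U Lam g X x h = eexp M (\<lambda>\<omega>.
      (SUP u\<in>Ucal M T U. ereal (reward T Lam g X x u \<omega> - h (path u \<omega>) (path w \<omega>))))"

end

theory Submission
  imports Defs
begin

text \<open>By strong duality, the two optimality conditions together say that the chain
  \<open>J(u*) \<le> sup J = inf D \<le> D(h*)\<close> is tight. Since h* is admissible, \<open>E[h*(u*,w)] \<le> 0\<close>, and since
  u* is one of the competitors in the pathwise supremum defining the dual objective,
  \<open>J(u*) \<le> J(u*) - E[h*(u*,w)] \<le> D(h*)\<close>. Hence the chain is tight exactly when both of these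
  inequalities are equalities.\<close>

lemma eexp_ereal_integrable:
  assumes "integrable M f"
  shows "eexp M (\<lambda>\<omega>. ereal (f \<omega>)) = ereal (integral\<^sup>L M f)"
proof -
  have pos: "(\<integral>\<^sup>+\<omega>. ennreal (f \<omega>) \<partial>M) = ennreal (\<integral>\<omega>. max 0 (f \<omega>) \<partial>M)"
    and neg: "(\<integral>\<^sup>+\<omega>. ennreal (- f \<omega>) \<partial>M) = ennreal (\<integral>\<omega>. max 0 (- f \<omega>) \<partial>M)"
    using nn_integral_eq_integral[of M "\<lambda>\<omega>. max 0 (f \<omega>)"]
      nn_integral_eq_integral[of M "\<lambda>\<omega>. max 0 (- f \<omega>)"] assms
    by (auto simp: ennreal_max_0)
  have "integral\<^sup>L M f = (\<integral>\<omega>. max 0 (f \<omega>) - max 0 (- f \<omega>) \<partial>M)"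
    by (rule Bochner_Integration.integral_cong) auto
  also have "\<dots> = (\<integral>\<omega>. max 0 (f \<omega>) \<partial>M) - (\<integral>\<omega>. max 0 (- f \<omega>) \<partial>M)"
    using assms by (intro Bochner_Integration.integral_diff) auto
  finally have "integral\<^sup>L M f = \<dots>" .
  then show ?thesis
    unfolding eexp_def by (simp add: pos neg)
qed

lemma eexp_mono:
  assumes "\<And>\<omega>. \<omega> \<in> space M \<Longrightarrow> Y \<omega> \<le> Z \<omega>"
  shows "eexp M Y \<le> eexp M Z"
  unfolding eexp_def
proof (rule ereal_minus_mono)
  show "enn2ereal (\<integral>\<^sup>+\<omega>. e2ennreal (Y \<omega>) \<partial>M) \<le> enn2ereal (\<integral>\<^sup>+\<omega>. e2ennreal (Z \<omega>) \<partial>M)"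
   and "enn2ereal (\<integral>\<^sup>+\<omega>. e2ennreal (- Z \<omega>) \<partial>M) \<le> enn2ereal (\<integral>\<^sup>+\<omega>. e2ennreal (- Y \<omega>) \<partial>M)"
    unfolding less_eq_ennreal.rep_eq[symmetric]
    using assms by (auto intro!: nn_integral_mono e2ennreal_mono)
qed

lemma UF_subset_Ucal:
  assumes "0 \<le> T" and "sets M = aug_filt M w T"
  shows "UF M w T U X x \<subseteq> Ucal M T U"
proof
  fix u assume "u \<in> UF M w T U X x"
  then have prog: "progressive M w T u" and inU: "\<forall>s\<in>{0..T}. \<forall>\<omega>\<in>space M. u s \<omega> \<in> U"
    unfolding UF_def by auto
  have "sets (filt_meas M w T) = sets M"
    unfolding filt_meas_def assms(2)[symmetric] by (simp add: sets.sigma_sets_eq)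
  then have "sets (restrict_space borel {0..T} \<Otimes>\<^sub>M filt_meas M w T)
      = sets (restrict_space borel {0..T} \<Otimes>\<^sub>M M)"
    by (rule sets_pair_measure_cong[OF refl])
  moreover have "(\<lambda>(s, \<omega>). u s \<omega>)
      \<in> borel_measurable (restrict_space borel {0..T} \<Otimes>\<^sub>M filt_meas M w T)"
    using prog assms(1) unfolding progressive_def by auto
  ultimately have "(\<lambda>(s, \<omega>). u s \<omega>) \<in> borel_measurable (restrict_space borel {0..T} \<Otimes>\<^sub>M M)"
    using measurable_cong_sets[OF _ refl] by metis
  then show "u \<in> Ucal M T U"
    unfolding Ucal_def using inU by blast
qed

lemma eexp_penalized_reward_le_Dobj:
  assumes "u \<in> Ucal M T U"
  shows "eexp M (\<lambda>\<omega>. ereal (reward T Lam g X x u \<omega> - h (path u \<omega>) (path w \<omega>)))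
    \<le> Dobj M w T U Lam g X x h"
  unfolding Dobj_def by (rule eexp_mono) (rule SUP_upper[OF assms])

lemma duality_chain_tight_iff:
  fixes J P D :: ereal and r a :: real
  assumes "J = ereal r" and "J \<le> P" and "P \<le> D" and "ereal (r - a) \<le> D" and "a \<le> 0"
  shows "(J = P \<and> D = P) \<longleftrightarrow> (a = 0 \<and> ereal (r - a) = D)"
  using assms by (cases P; cases D) auto

theorem theorem4:
  fixes M :: "'w measure" and T :: real and w :: "real \<Rightarrow> 'w \<Rightarrow> real^'m"
    and U :: "(real^'d) set"
    and X :: "real^'n \<Rightarrow> (real \<Rightarrow> 'w \<Rightarrow> real^'d) \<Rightarrow> real \<Rightarrow> 'w \<Rightarrow> real^'n"
    and Lam :: "real^'n \<Rightarrow> real" and g :: "real \<Rightarrow> real^'n \<Rightarrow> real^'d \<Rightarrow> real"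
    and x :: "real^'n"
    and ustar :: "real \<Rightarrow> 'w \<Rightarrow> real^'d"
    and hstar :: "(real \<Rightarrow> real^'d) \<Rightarrow> (real \<Rightarrow> real^'m) \<Rightarrow> real"
  assumes M: "prob_space M" and T: "0 < T"
    and BM: "brownian M T w"
    and FT: "sets M = aug_filt M w T"
    and X0: "\<And>y u \<omega>. u \<in> Ucal M T U \<Longrightarrow> \<omega> \<in> space M \<Longrightarrow> X y u 0 \<omega> = y"
    and Xmeas: "\<And>y u. u \<in> Ucal M T U \<Longrightarrow>
        (\<lambda>(s, \<omega>). X y u s \<omega>) \<in> borel_measurable (restrict_space borel {0..T} \<Otimes>\<^sub>M M)"
    and Lam_growth: "\<exists>C (k::nat). \<forall>y. \<bar>Lam y\<bar> \<le> C * (1 + norm y ^ k)"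
    and g_growth: "\<exists>C (k::nat). \<forall>t y v. \<bar>g t y v\<bar> \<le> C * (1 + norm y ^ k + norm v ^ k)"
    and J_int: "\<And>y u. u \<in> UF M w T U X y \<Longrightarrow> integrable M (reward T Lam g X y u)"
    and strong_duality: "\<And>y. (SUP u\<in>UF M w T U X y. Jobj M T Lam g X y u)
                         = (INF h\<in>MF M w T U X. Dobj M w T U Lam g X y h)"
    and ustar_in: "ustar \<in> UF M w T U X x"
    and hstar_in: "hstar \<in> MF M w T U X"
  shows "(Jobj M T Lam g X x ustar = (SUP u\<in>UF M w T U X x. Jobj M T Lam g X x u) \<and>
          Dobj M w T U Lam g X x hstar = (INF h\<in>MF M w T U X. Dobj M w T U Lam g X x h))
     \<longleftrightarrow>
         ((\<integral>\<omega>. hstar (path ustar \<omega>) (path w \<omega>) \<partial>M) = 0 \<and>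
          eexp M (\<lambda>\<omega>. ereal (reward T Lam g X x ustar \<omega> - hstar (path ustar \<omega>) (path w \<omega>)))
            = Dobj M w T U Lam g X x hstar)"
proof -
  let ?P = "SUP u\<in>UF M w T U X x. Jobj M T Lam g X x u"
  let ?a = "\<integral>\<omega>. hstar (path ustar \<omega>) (path w \<omega>) \<partial>M"
  let ?r = "integral\<^sup>L M (reward T Lam g X x ustar)"
  have reward_int: "integrable M (reward T Lam g X x ustar)"
    using J_int ustar_in .
  have penalty_int: "integrable M (\<lambda>\<omega>. hstar (path ustar \<omega>) (path w \<omega>))"
    and penalty_nonpos: "?a \<le> 0"
    using hstar_in ustar_in unfolding MF_def by auto
  have J_eq: "Jobj M T Lam g X x ustar = ereal ?r"
    unfolding Jobj_def using eexp_ereal_integrable[OF reward_int] .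
  have penalized_eq: "eexp M (\<lambda>\<omega>. ereal (reward T Lam g X x ustar \<omega> - hstar (path ustar \<omega>) (path w \<omega>)))
      = ereal (?r - ?a)"
    using eexp_ereal_integrable[OF Bochner_Integration.integrable_diff[OF reward_int penalty_int]]
      reward_int penalty_int by simp
  have J_le: "Jobj M T Lam g X x ustar \<le> ?P"
    using ustar_in by (rule SUP_upper)
  have P_le: "?P \<le> Dobj M w T U Lam g X x hstar"
    unfolding strong_duality using hstar_in by (rule INF_lower)
  have penalized_le: "ereal (?r - ?a) \<le> Dobj M w T U Lam g X x hstar"
    unfolding penalized_eq[symmetric]
    using UF_subset_Ucal[OF less_imp_le[OF T] FT] ustar_in
    by (intro eexp_penalized_reward_le_Dobj) blast
  show ?thesis
    using duality_chain_tight_iff[OF J_eq J_le P_le penalized_le penalty_nonpos]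
    unfolding penalized_eq strong_duality[symmetric] by simp
qed

end
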